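(* If $f_0, f_1, \dots : X \to \mathbb{R}$ are limsup functions converging uniformly to $f : X \to \mathbb{R}$, then $f$ is a limsup function.
   Context: Let $A$ be a non-empty countable set and $T$ a pruned tree on $A$ (a set of finite sequences of elements of $A$, closed under initial segments, in which every sequence has a proper extension in $T$). Let $X$ be the set of infinite branches of $T$, with the topology generated by the cylinder sets $O(s) = \{x \in X : s \text{ is an initial segment of } x\}$, $s \in T$. A function $f : X \to \mathbb{R}$ is a limsup function if there exists $u : T \to \mathbb{R}$ with $f(x) = \limsup_{t\to\infty} u(x_0,\dots,x_t)$ for every $x \in X$. *)

theory Defs
  imports "HOL-Analysis.Analysis"
begin

text \<open>Finite sequences are lists; an infinite sequence is a function nat => 'a.
  The initial segment (x_0,...,x_{n-1}) of x is map x [0..<n].\<close>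

definition pruned_tree :: "'a set \<Rightarrow> 'a list set \<Rightarrow> bool" where
  "pruned_tree A T \<longleftrightarrow>
     (\<forall>s\<in>T. set s \<subseteq> A) \<and>
     (\<forall>s\<in>T. \<forall>n. take n s \<in> T) \<and>
     (\<forall>s\<in>T. \<exists>t\<in>T. length s < length t \<and> take (length s) t = s)"

definition branches :: "'a list set \<Rightarrow> (nat \<Rightarrow> 'a) set" where
  "branches T = {x. \<forall>n. map x [0..<n] \<in> T}"

definition is_limsup_function :: "'a list set \<Rightarrow> ((nat \<Rightarrow> 'a) \<Rightarrow> real) \<Rightarrow> bool" where
  "is_limsup_function T f \<longleftrightarrow>
     (\<exists>u :: 'a list \<Rightarrow> real. \<forall>x\<in>branches T.
        limsup (\<lambda>t. ereal (u (map x [0..<Suc t]))) = ereal (f x))"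

end

theory Submission
  imports Defs
begin

text \<open>Choose \<open>g\<^sub>k = fs (n\<^sub>k)\<close> with \<open>|g\<^sub>k - f| < 1/(k+1)\<close> and prefix functions
  \<open>v\<^sub>k\<close> realising \<open>g\<^sub>k\<close> as limsups. For a rational \<open>q\<close>, the level of \<open>q\<close> along a branch
  \<open>x\<close> counts, by a diagonal enumeration that serves every \<open>k\<close> infinitely often, the stages at
  which \<open>v\<^sub>k\<close> exceeds \<open>q - 1/(k+1)\<close>. It is unbounded if \<open>q < f x\<close> and bounded if
  \<open>q \<ge> f x + 2/(k+1)\<close> for some \<open>k\<close>. The new prefix function outputs the largest rational whose
  level has just increased: rationals below \<open>f x\<close> are output infinitely often, while only
  finitely many rationals above \<open>f x + \<epsilon>\<close> are ever output.\<close>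

lemma frequently_less_if_less_Limsup:
  fixes X :: "_ \<Rightarrow> 'a::complete_linorder"
  assumes "l < Limsup F X"
  shows "\<exists>\<^sub>F x in F. l < X x"
proof (rule ccontr)
  assume "\<not> (\<exists>\<^sub>F x in F. l < X x)"
  then have "\<forall>\<^sub>F x in F. X x \<le> l"
    by (simp add: not_frequently not_less)
  then have "Limsup F X \<le> l"
    by (rule Limsup_bounded)
  with assms show False
    by simp
qed

lemma le_Limsup_if_frequently:
  fixes X :: "_ \<Rightarrow> 'a::complete_linorder"
  assumes "\<exists>\<^sub>F x in F. l \<le> X x"
  shows "l \<le> Limsup F X"
proof (rule ccontr)
  assume "\<not> l \<le> Limsup F X"
  then have "\<forall>\<^sub>F x in F. X x < l"
    by (intro Limsup_lessD) simp
  with assms show False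
    by (simp add: frequently_def eventually_mono not_le)
qed

lemma incseq_nat_bounded_imp_eventually_const:
  fixes h :: "nat \<Rightarrow> nat"
  assumes "incseq h" and "\<And>n. h n \<le> B"
  obtains N where "\<And>n. N \<le> n \<Longrightarrow> h n = h N"
proof -
  have fin: "finite (range h)"
    using assms(2) by (meson finite_atMost finite_subset image_subsetI atMost_iff)
  have "Max (range h) \<in> range h"
    using fin by (intro Max_in) auto
  then obtain N where N: "h N = Max (range h)"
    by auto
  have "h n = h N" if "N \<le> n" for n
    using fin N incseqD[OF assms(1) that] by (simp add: antisym)
  then show thesis
    using that by blast
qed

lemma incseq_nat_unbounded_frequently_increases:
  fixes h :: "nat \<Rightarrow> nat"
  assumes "incseq h" and "\<And>B. \<exists>n. B \<le> h n"
  shows "\<exists>\<^sub>F t in sequentially. h t < h (Suc t)"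
proof (rule ccontr)
  assume "\<not> ?thesis"
  then obtain N where N: "\<And>t. N \<le> t \<Longrightarrow> h (Suc t) \<le> h t"
    by (auto simp: not_frequently not_less eventually_sequentially)
  have const: "h t = h N" if "N \<le> t" for t
    using that
  proof (induction t rule: dec_induct)
    case (step t)
    then show ?case
      using N[of t] incseq_SucD[OF assms(1), of t] by simp
  qed simp
  have "h n \<le> h N" for n
    using incseqD[OF assms(1), of n "max n N"] const[of "max n N"] by linarith
  moreover obtain n where "Suc (h N) \<le> h n"
    using assms(2) by blast
  ultimately show False
    by (metis not_less_eq_eq)
qed

text \<open>Every \<open>k\<close> is the first component of infinitely many codes, so the
  counter is unbounded exactly when every \<open>Q k\<close> holds frequently.\<close>

primrec diag_counter :: "(nat \<Rightarrow> nat \<Rightarrow> bool) \<Rightarrow> nat \<Rightarrow> nat" where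
  "diag_counter Q 0 = 0"
| "diag_counter Q (Suc n) =
     (if Q (fst (prod_decode (diag_counter Q n))) n then Suc (diag_counter Q n)
      else diag_counter Q n)"

lemma incseq_diag_counter: "incseq (diag_counter Q)"
  by (rule incseq_SucI) simp

lemma diag_counter_cong:
  "(\<And>k m. m < n \<Longrightarrow> Q k m = Q' k m) \<Longrightarrow> diag_counter Q n = diag_counter Q' n"
  by (induction n) auto

lemma diag_counter_mono_pred:
  assumes "\<And>k m. Q k m \<Longrightarrow> Q' k m"
  shows "diag_counter Q n \<le> diag_counter Q' n"
proof (induction n)
  case (Suc n)
  then consider "diag_counter Q n < diag_counter Q' n" | "diag_counter Q n = diag_counter Q' n"
    by linarith
  then show ?case
    by cases (use assms in auto)
qed simp

lemma diag_counter_unbounded: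
  assumes "\<And>k. \<exists>\<^sub>F n in sequentially. Q k n"
  shows "\<exists>n. B \<le> diag_counter Q n"
proof (rule ccontr)
  assume "\<not> ?thesis"
  then obtain N where N: "\<And>n. N \<le> n \<Longrightarrow> diag_counter Q n = diag_counter Q N"
    using incseq_nat_bounded_imp_eventually_const[OF incseq_diag_counter, of Q B]
    by (meson not_le less_imp_le)
  let ?k = "fst (prod_decode (diag_counter Q N))"
  have "\<not> Q ?k n" if "N \<le> n" for n
    using N[of n] N[of "Suc n"] that by (auto split: if_splits)
  then have "\<forall>\<^sub>F n in sequentially. \<not> Q ?k n"
    by (auto simp: eventually_sequentially)
  with assms[of ?k] show False
    by (simp add: frequently_def)
qed

lemma diag_counter_bounded:
  assumes "\<forall>\<^sub>F n in sequentially. \<not> Q k n"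
  obtains B where "\<And>n. diag_counter Q n \<le> B"
proof -
  obtain N where N: "\<And>n. N \<le> n \<Longrightarrow> \<not> Q k n"
    using assms by (auto simp: eventually_sequentially)
  \<comment> \<open>Once at the code \<open>p\<close> of a pair \<open>(k, _)\<close>, the counter waits for \<open>Q k\<close> forever.\<close>
  define p where "p = prod_encode (k, diag_counter Q N)"
  have "diag_counter Q n \<le> p" if "N \<le> n" for n
    using that
  proof (induction n rule: dec_induct)
    case base
    show ?case
      unfolding p_def by (rule le_prod_encode_2)
  next
    case (step n)
    then consider "diag_counter Q n < p" | "diag_counter Q n = p"
      by linarith
    then show ?case
      by cases (use N[of n] step.hyps in \<open>auto simp: p_def\<close>)
  qed
  then have "diag_counter Q n \<le> p" for n
    using incseqD[OF incseq_diag_counter, of n "max n N" Q]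
    by (meson le_trans max.cobounded1 max.cobounded2)
  then show thesis
    using that by blast
qed

definition tol :: "nat \<Rightarrow> real" where
  "tol k = 1 / real (Suc k)"

definition rat_enum :: "nat \<Rightarrow> real" where
  "rat_enum i = real_of_rat (from_nat i)"

definition level :: "(nat \<Rightarrow> 'a list \<Rightarrow> real) \<Rightarrow> real \<Rightarrow> 'a list \<Rightarrow> nat" where
  "level v q s = diag_counter (\<lambda>k m. q - tol k < v k (take (Suc m) s)) (length s)"

text \<open>The bound \<open>i \<le> level\<close> lets the \<open>i\<close>-th rational fire only after its level has
  reached \<open>i\<close>; levels of rationals above the limit stay bounded, so only finitely many of
  them ever fire along a branch. The fallback value \<open>- length s\<close> tends to \<open>-\<infinity>\<close> and so
  never affects the limsup.\<close>

definition fires :: "(nat \<Rightarrow> 'a list \<Rightarrow> real) \<Rightarrow> nat \<Rightarrow> 'a list \<Rightarrow> bool" where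
  "fires v i s \<longleftrightarrow> i \<le> length s \<and> i \<le> level v (rat_enum i) s
     \<and> level v (rat_enum i) (butlast s) < level v (rat_enum i) s"

definition diag_limsup :: "(nat \<Rightarrow> 'a list \<Rightarrow> real) \<Rightarrow> 'a list \<Rightarrow> real" where
  "diag_limsup v s =
     (if \<exists>i. fires v i s then Max (rat_enum ` {i. fires v i s}) else - real (length s))"

definition branch_level :: "(nat \<Rightarrow> 'a list \<Rightarrow> real) \<Rightarrow> real \<Rightarrow> (nat \<Rightarrow> 'a) \<Rightarrow> nat \<Rightarrow> nat" where
  "branch_level v q x = diag_counter (\<lambda>k m. q - tol k < v k (map x [0..<Suc m]))"

lemma level_prefix: "level v q (map x [0..<n]) = branch_level v q x n"
  unfolding level_def branch_level_def length_map length_upt diff_zero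
  by (rule diag_counter_cong) (auto simp: take_map)

lemma fires_prefix_iff:
  "fires v i (map x [0..<Suc t]) \<longleftrightarrow> i \<le> Suc t \<and> i \<le> branch_level v (rat_enum i) x (Suc t)
     \<and> branch_level v (rat_enum i) x t < branch_level v (rat_enum i) x (Suc t)"
proof -
  have "butlast (map x [0..<Suc t]) = map x [0..<t]"
    by (simp add: map_butlast[symmetric])
  then show ?thesis
    unfolding fires_def by (simp only: level_prefix length_map length_upt diff_zero)
qed

lemma finite_fires: "finite {i. fires v i s}"
  by (rule finite_subset[of _ "{..length s}"]) (auto simp: fires_def)

lemma incseq_branch_level: "incseq (branch_level v q x)"
  unfolding branch_level_def by (rule incseq_diag_counter)

lemma branch_level_antimono: "q' \<le> q \<Longrightarrow> branch_level v q x n \<le> branch_level v q' x n"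
  unfolding branch_level_def by (rule diag_counter_mono_pred) auto

context
  fixes v :: "nat \<Rightarrow> 'a list \<Rightarrow> real" and x :: "nat \<Rightarrow> 'a" and g :: "nat \<Rightarrow> real" and c :: real
  assumes limsup_v: "\<And>k. limsup (\<lambda>t. ereal (v k (map x [0..<Suc t]))) = ereal (g k)"
    and g_close: "\<And>k. \<bar>g k - c\<bar> < tol k"
begin

lemma branch_level_unbounded:
  assumes "q < c"
  shows "\<exists>n. B \<le> branch_level v q x n"
  unfolding branch_level_def
proof (rule diag_counter_unbounded)
  fix k
  have "ereal (q - tol k) < limsup (\<lambda>t. ereal (v k (map x [0..<Suc t])))"
    using limsup_v[of k] g_close[of k] assms by simp
  then show "\<exists>\<^sub>F m in sequentially. q - tol k < v k (map x [0..<Suc m])"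
    by (auto dest: frequently_less_if_less_Limsup)
qed

lemma branch_level_bounded:
  assumes "c + 2 * tol k \<le> q"
  obtains B where "\<And>n. branch_level v q x n \<le> B"
proof -
  have "limsup (\<lambda>t. ereal (v k (map x [0..<Suc t]))) < ereal (q - tol k)"
    using limsup_v[of k] g_close[of k] assms by simp
  from Limsup_lessD[OF this]
  have "\<forall>\<^sub>F m in sequentially. \<not> q - tol k < v k (map x [0..<Suc m])"
    by (rule eventually_mono) simp
  from diag_counter_bounded[where Q = "\<lambda>k m. q - tol k < v k (map x [0..<Suc m])", OF this]
  show thesis
    using that unfolding branch_level_def by blast
qed

lemma limsup_diag_limsup_le:
  assumes "0 < \<epsilon>"
  shows "limsup (\<lambda>t. ereal (diag_limsup v (map x [0..<Suc t]))) \<le> ereal (c + \<epsilon>)"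
proof -
  define q where "q = c + \<epsilon>"
  obtain k where "inverse (real (Suc k)) < \<epsilon> / 2"
    using reals_Archimedean \<open>0 < \<epsilon>\<close> by (metis half_gt_zero)
  then have "c + 2 * tol k \<le> q"
    unfolding q_def tol_def by (simp add: field_simps)
  then obtain B where B: "\<And>n. branch_level v q x n \<le> B"
    using branch_level_bounded by blast
  define I where "I = {i. i \<le> B \<and> q \<le> rat_enum i}"
  have "\<forall>\<^sub>F t in sequentially. \<forall>i\<in>I.
      branch_level v (rat_enum i) x (Suc t) = branch_level v (rat_enum i) x t"
  proof (rule eventually_ball_finite)
    show "finite I"
      unfolding I_def by simp
    show "\<forall>i\<in>I. \<forall>\<^sub>F t in sequentially.
        branch_level v (rat_enum i) x (Suc t) = branch_level v (rat_enum i) x t"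
    proof
      fix i assume "i \<in> I"
      then have "branch_level v (rat_enum i) x n \<le> B" for n
        using B[of n] branch_level_antimono[of q "rat_enum i" v x n] by (simp add: I_def)
      then obtain N where N: "\<And>n. N \<le> n \<Longrightarrow> branch_level v (rat_enum i) x n
          = branch_level v (rat_enum i) x N"
        using incseq_nat_bounded_imp_eventually_const[OF incseq_branch_level] by blast
      show "\<forall>\<^sub>F t in sequentially.
          branch_level v (rat_enum i) x (Suc t) = branch_level v (rat_enum i) x t"
        unfolding eventually_sequentially using N le_SucI by metis
    qed
  qed
  moreover have "\<forall>\<^sub>F t in sequentially. - real (Suc t) \<le> q"
    using eventually_ge_at_top[of "nat \<lceil>- q\<rceil>"] by (rule eventually_mono) linarith
  ultimately have "\<forall>\<^sub>F t in sequentially. ereal (diag_limsup v (map x [0..<Suc t])) \<le> ereal q"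
  proof eventually_elim
    case (elim t)
    let ?s = "map x [0..<Suc t]"
    have "rat_enum i \<le> q" if "fires v i ?s" for i
    proof (rule ccontr)
      assume "\<not> rat_enum i \<le> q"
      then have "branch_level v (rat_enum i) x (Suc t) \<le> B"
        using B[of "Suc t"] branch_level_antimono[of q "rat_enum i" v x "Suc t"] by simp
      moreover have "i \<le> branch_level v (rat_enum i) x (Suc t)"
        using that by (simp only: fires_prefix_iff)
      ultimately have "i \<in> I"
        using \<open>\<not> rat_enum i \<le> q\<close> by (simp add: I_def)
      with elim(1) that show False
        by (simp only: fires_prefix_iff) simp
    qed
    then show ?case
      using elim(2) finite_fires[of v ?s] by (auto simp: diag_limsup_def)
  qed
  then show ?thesis
    unfolding q_def by (rule Limsup_bounded)
qed

lemma limsup_diag_limsup_ge: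
  assumes "y < c"
  shows "ereal y \<le> limsup (\<lambda>t. ereal (diag_limsup v (map x [0..<Suc t])))"
proof -
  obtain r where "r \<in> \<rat>" "y < r" "r < c"
    using Rats_dense_in_real[OF assms] by blast
  then obtain i where i: "rat_enum i = r"
    unfolding rat_enum_def by (metis Rats_cases from_nat_to_nat)
  let ?h = "branch_level v r x"
  have unbounded: "\<exists>n. B \<le> ?h n" for B
    using branch_level_unbounded \<open>r < c\<close> by blast
  then obtain n0 where "i \<le> ?h n0"
    by blast
  have "\<forall>\<^sub>F t in sequentially. i \<le> Suc t \<and> i \<le> ?h (Suc t)"
    using eventually_ge_at_top[of "max i n0"]
  proof (rule eventually_mono)
    fix t assume "max i n0 \<le> t"
    then show "i \<le> Suc t \<and> i \<le> ?h (Suc t)"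
      using \<open>i \<le> ?h n0\<close> incseqD[OF incseq_branch_level, of n0 "Suc t" v r x] by simp
  qed
  with incseq_nat_unbounded_frequently_increases[OF incseq_branch_level unbounded]
  have "\<exists>\<^sub>F t in sequentially. fires v i (map x [0..<Suc t])"
    unfolding fires_prefix_iff i by (rule frequently_eventually_frequently[THEN frequently_elim1]) auto
  then have "\<exists>\<^sub>F t in sequentially. ereal r \<le> ereal (diag_limsup v (map x [0..<Suc t]))"
  proof (rule frequently_elim1)
    fix t assume "fires v i (map x [0..<Suc t])"
    then show "ereal r \<le> ereal (diag_limsup v (map x [0..<Suc t]))"
      using finite_fires i by (auto simp: diag_limsup_def intro!: Max_ge)
  qed
  then have "ereal r \<le> limsup (\<lambda>t. ereal (diag_limsup v (map x [0..<Suc t])))"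
    by (rule le_Limsup_if_frequently)
  moreover have "ereal y \<le> ereal r"
    using \<open>y < r\<close> by simp
  ultimately show ?thesis
    by (rule order_trans[rotated])
qed

lemma limsup_diag_limsup:
  "limsup (\<lambda>t. ereal (diag_limsup v (map x [0..<Suc t]))) = ereal c"
proof (rule antisym)
  show "limsup (\<lambda>t. ereal (diag_limsup v (map x [0..<Suc t]))) \<le> ereal c"
    by (rule ereal_le_epsilon2) (use limsup_diag_limsup_le in simp)
  show "ereal c \<le> limsup (\<lambda>t. ereal (diag_limsup v (map x [0..<Suc t])))"
  proof (rule dense_le)
    fix w assume "w < ereal c"
    then obtain z where "w < ereal z" "ereal z < ereal c"
      using ereal_dense2 by blast
    then show "w \<le> limsup (\<lambda>t. ereal (diag_limsup v (map x [0..<Suc t])))"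
      using limsup_diag_limsup_ge[of z] by simp
  qed
qed

end

theorem mainTheorem4:
  fixes A :: "'a set" and T :: "'a list set"
    and fs :: "nat \<Rightarrow> (nat \<Rightarrow> 'a) \<Rightarrow> real" and f :: "(nat \<Rightarrow> 'a) \<Rightarrow> real"
  assumes "countable A" and "A \<noteq> {}" and "pruned_tree A T"
    and "\<And>n. is_limsup_function T (fs n)"
    and "uniform_limit (branches T) fs f sequentially"
  shows "is_limsup_function T f"
proof -
  have "\<exists>n. \<forall>x\<in>branches T. \<bar>fs n x - f x\<bar> < tol k" for k
  proof -
    have "0 < tol k"
      by (simp add: tol_def)
    with assms(5) have "\<forall>\<^sub>F n in sequentially. \<forall>x\<in>branches T. dist (fs n x) (f x) < tol k"
      unfolding uniform_limit_iff by blast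
    then show ?thesis
      by (auto simp: dist_real_def eventually_sequentially)
  qed
  then obtain nn where nn: "\<And>k x. x \<in> branches T \<Longrightarrow> \<bar>fs (nn k) x - f x\<bar> < tol k"
    by metis
  have "\<forall>k. \<exists>w. \<forall>x\<in>branches T. limsup (\<lambda>t. ereal (w (map x [0..<Suc t]))) = ereal (fs (nn k) x)"
    using assms(4) by (simp add: is_limsup_function_def)
  then obtain v where v: "\<And>k x. x \<in> branches T \<Longrightarrow>
      limsup (\<lambda>t. ereal (v k (map x [0..<Suc t]))) = ereal (fs (nn k) x)"
    by metis
  show ?thesis
    unfolding is_limsup_function_def using limsup_diag_limsup[OF v nn] by blast
qed

end
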